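(* For every $d\geq1$ and $\delta>0$ there is a constant $C(d,\delta)$ such that: for every box $B=\prod_{k=1}^d[a_k,b_k]\subset\mathbb{R}^d$, every integer $n\geq1$, and every measure $\mu$ with density $h$ w.r.t. Lebesgue measure satisfying $\delta\leq h\leq\delta^{-1}$ (on $B$), there exists a partition $(B_1,\dots,B_n)$ of $B$ into $n$ sub-boxes such that $\mu(B_i)=\frac1n\mu(B)$ for all $i$, and $$\frac{l(B)}{C(d,\delta)n^{1/d}}\leq l(B_i)\leq L(B_i)\leq\frac{C(d,\delta)}{n^{1/d}}L(B)\quad\text{for all }i.$$
   Context: For a box $B=\prod_{k=1}^d[a_k,b_k]$, $l(B)=\min_k(b_k-a_k)$ and $L(B)=\max_k(b_k-a_k)$ are its minimal and maximal edge lengths. Sub-boxes forming a partition may share boundary faces (of Lebesgue measure zero). *)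

theory Defs
  imports "HOL-Analysis.Analysis"
begin

definition min_edge :: "real^'d \<Rightarrow> real^'d \<Rightarrow> real" where
  "min_edge a b = Min (range (\<lambda>k. b$k - a$k))"

definition max_edge :: "real^'d \<Rightarrow> real^'d \<Rightarrow> real" where
  "max_edge a b = Max (range (\<lambda>k. b$k - a$k))"

end

theory Submission
  imports Defs
begin

text \<open>
  Cut the box by a hyperplane orthogonal to a longest edge, at the position where the two
  pieces carry the fractions \<open>\<lfloor>n/2\<rfloor>/n\<close> and \<open>\<lceil>n/2\<rceil>/n\<close> of the measure, and partition the
  pieces recursively into \<open>\<lfloor>n/2\<rfloor>\<close> and \<open>\<lceil>n/2\<rceil>\<close> boxes. Both fractions lie in \<open>[1/3, 2/3]\<close>,
  and since \<open>\<delta> \<le> h \<le> 1/\<delta>\<close> the measure of a slab is comparable to its volume, so every cut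
  stays at distance at least \<open>\<delta>\<^sup>2/3\<close> times the longest edge from both faces. Inductively, each
  edge of a final box is either an edge of \<open>B\<close> or at least \<open>\<delta>\<^sup>2/3\<close> times the longest edge of
  that box. A final box has volume within a factor \<open>\<delta>\<^sup>2\<close> of \<open>vol(B)/n\<close>, and comparing
  volumes with this edge structure gives both edge bounds with \<open>C = 3/\<delta>\<^sup>4\<close>.
\<close>

section \<open>Edges of boxes\<close>

lemma max_edge_ge: "b$k - a$k \<le> max_edge a b"
  unfolding max_edge_def by (rule Max_ge) auto

lemma max_edge_attained: "\<exists>k. max_edge a b = b$k - a$k"
proof -
  have "max_edge a b \<in> range (\<lambda>k. b$k - a$k)"
    unfolding max_edge_def by (rule Max_in) auto
  then show ?thesis by auto
qed

lemma min_edge_le: "min_edge a b \<le> b$k - a$k"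
  unfolding min_edge_def by (rule Min_le) auto

lemma min_edge_attained: "\<exists>k. min_edge a b = b$k - a$k"
proof -
  have "min_edge a b \<in> range (\<lambda>k. b$k - a$k)"
    unfolding min_edge_def by (rule Min_in) auto
  then show ?thesis by auto
qed

lemma min_edge_le_max_edge: "min_edge a b \<le> max_edge a b"
  by (rule order_trans[OF min_edge_le max_edge_ge])

lemma max_edge_mono:
  fixes a b c e :: "real^'d"
  assumes "\<forall>k. c$k \<le> e$k" and "cbox c e \<subseteq> cbox a b"
  shows "max_edge c e \<le> max_edge a b"
proof -
  have "\<forall>k. a$k \<le> c$k \<and> e$k \<le> b$k"
    using assms subset_interval_cart(1) by blast
  moreover obtain k where "max_edge c e = e$k - c$k" using max_edge_attained by blast
  ultimately have "max_edge c e \<le> b$k - a$k" by (metis add_mono diff_mono)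
  also have "\<dots> \<le> max_edge a b" by (rule max_edge_ge)
  finally show ?thesis .
qed

lemma max_edge_pos: "\<forall>k. a$k < b$k \<Longrightarrow> 0 < max_edge a b"
  using max_edge_ge[of b undefined a] by (metis diff_gt_0_iff_gt less_le_trans)

lemma min_edge_pos: "\<forall>k. a$k < b$k \<Longrightarrow> 0 < min_edge a b"
  using min_edge_attained[of a b] by (metis diff_gt_0_iff_gt)

lemma min_edge_power_le_prod:
  fixes a b :: "real^'d"
  assumes "\<forall>k. a$k < b$k"
  shows "min_edge a b ^ CARD('d) \<le> (\<Prod>k\<in>UNIV. b$k - a$k)"
proof -
  have "(\<Prod>k\<in>(UNIV::'d set). min_edge a b) \<le> (\<Prod>k\<in>UNIV. b$k - a$k)"
    using min_edge_pos[OF assms] by (intro prod_mono) (simp add: min_edge_le)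
  then show ?thesis by simp
qed

lemma prod_le_max_edge_power:
  fixes c e :: "real^'d"
  assumes "\<forall>k. c$k \<le> e$k"
  shows "(\<Prod>k\<in>UNIV. e$k - c$k) \<le> max_edge c e ^ CARD('d)"
proof -
  have "(\<Prod>k\<in>UNIV. e$k - c$k) \<le> (\<Prod>k\<in>(UNIV::'d set). max_edge c e)"
    using assms by (intro prod_mono) (simp add: max_edge_ge)
  then show ?thesis by simp
qed

section \<open>Cutting a box along one coordinate\<close>

definition vec_upd :: "'a^'n \<Rightarrow> 'n \<Rightarrow> 'a \<Rightarrow> 'a^'n" where
  "vec_upd v j t = (\<chi> k. if k = j then t else v$k)"

lemma vec_upd_nth [simp]: "vec_upd v j t $ k = (if k = j then t else v$k)"
  unfolding vec_upd_def by simp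

lemma vec_upd_same [simp]: "vec_upd v j (v$j) = v"
  by (simp add: vec_eq_iff)

lemma vec_upd_vec_upd [simp]: "vec_upd (vec_upd v j t) j s = vec_upd v j s"
  by (simp add: vec_eq_iff)

lemma cbox_vec_upd_subset:
  fixes a b :: "real^'d"
  assumes "a$j \<le> s" "t \<le> b$j"
  shows "cbox (vec_upd a j s) (vec_upd b j t) \<subseteq> cbox a b"
  using assms by (intro subset_interval_imp_cart(1)) auto

lemma cbox_split_coordinate:
  fixes a b :: "real^'d"
  assumes "a$j \<le> s" "s \<le> b$j"
  shows "cbox a b = cbox a (vec_upd b j s) \<union> cbox (vec_upd a j s) b"
proof
  show "cbox a (vec_upd b j s) \<union> cbox (vec_upd a j s) b \<subseteq> cbox a b"
    using assms by (intro Un_least subset_interval_imp_cart(1)) auto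
  show "cbox a b \<subseteq> cbox a (vec_upd b j s) \<union> cbox (vec_upd a j s) b"
  proof
    fix x assume x: "x \<in> cbox a b"
    show "x \<in> cbox a (vec_upd b j s) \<union> cbox (vec_upd a j s) b"
    proof (cases "x$j \<le> s")
      case True
      then have "x \<in> cbox a (vec_upd b j s)" using x by (simp add: mem_box_cart)
      then show ?thesis ..
    next
      case False
      then have "x \<in> cbox (vec_upd a j s) b" using x by (simp add: mem_box_cart)
      then show ?thesis ..
    qed
  qed
qed

lemma cbox_halves_Int_subset:
  fixes a b :: "real^'d"
  shows "cbox a (vec_upd b j s) \<inter> cbox (vec_upd a j s) b \<subseteq> {x. x$j = s}"
proof
  fix x assume "x \<in> cbox a (vec_upd b j s) \<inter> cbox (vec_upd a j s) b"
  then have "x$j \<le> vec_upd b j s $ j" "vec_upd a j s $ j \<le> x$j"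
    unfolding Int_iff mem_box_cart by blast+
  then show "x \<in> {x. x$j = s}" by simp
qed

lemma interior_cbox_halves_disjoint:
  fixes a b :: "real^'d"
  shows "interior (cbox a (vec_upd b j s)) \<inter> interior (cbox (vec_upd a j s) b) = {}"
proof -
  have False if "x \<in> box a (vec_upd b j s)" "x \<in> box (vec_upd a j s) b" for x
  proof -
    have "x$j < vec_upd b j s $ j" "vec_upd a j s $ j < x$j"
      using that unfolding mem_box_cart by blast+
    then show False by simp
  qed
  then show ?thesis by auto
qed

lemma measure_cbox_cart:
  fixes a b :: "real^'d"
  assumes "\<forall>k. a$k \<le> b$k"
  shows "measure lebesgue (cbox a b) = (\<Prod>k\<in>UNIV. b$k - a$k)"
  using assms by (simp add: content_cbox_cart interval_ne_empty_cart)

lemma measure_cbox_vec_upd: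
  fixes a b :: "real^'d"
  assumes "\<forall>k. a$k \<le> b$k" "s \<le> t"
  shows "measure lebesgue (cbox (vec_upd a j s) (vec_upd b j t)) = (t - s) * (\<Prod>k\<in>-{j}. b$k - a$k)"
proof -
  have "measure lebesgue (cbox (vec_upd a j s) (vec_upd b j t))
      = (\<Prod>k\<in>UNIV. vec_upd b j t $ k - vec_upd a j s $ k)"
    using assms by (intro measure_cbox_cart) auto
  also have "\<dots> = (\<Prod>k\<in>insert j (-{j}). vec_upd b j t $ k - vec_upd a j s $ k)"
    by (rule arg_cong[where f = "prod _"]) blast
  also have "\<dots> = (t - s) * (\<Prod>k\<in>-{j}. vec_upd b j t $ k - vec_upd a j s $ k)"
    by (subst prod.insert) auto
  also have "(\<Prod>k\<in>-{j}. vec_upd b j t $ k - vec_upd a j s $ k) = (\<Prod>k\<in>-{j}. b$k - a$k)"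
    by (intro prod.cong) auto
  finally show ?thesis .
qed

section \<open>Regular sub-boxes\<close>

definition regular_subbox ::
  "real \<Rightarrow> real^'d \<Rightarrow> real^'d \<Rightarrow> real^'d \<Rightarrow> real^'d \<Rightarrow> bool" where
  "regular_subbox \<rho> a b c e \<longleftrightarrow> (\<forall>k. e$k - c$k = b$k - a$k \<or> \<rho> * max_edge c e \<le> e$k - c$k)"

lemma regular_subbox_refl: "regular_subbox \<rho> a b a b"
  by (simp add: regular_subbox_def)

lemma regular_subbox_trans_cut:
  fixes a b a' b' c e :: "real^'d"
  assumes "regular_subbox \<rho> a' b' c e" "0 \<le> \<rho>"
    and "\<forall>k. k \<noteq> j \<longrightarrow> b'$k - a'$k = b$k - a$k" "\<rho> * max_edge a b \<le> b'$j - a'$j"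
    and "max_edge c e \<le> max_edge a b"
  shows "regular_subbox \<rho> a b c e"
  unfolding regular_subbox_def
proof
  fix k
  have "\<rho> * max_edge c e \<le> \<rho> * max_edge a b"
    using assms(5,2) by (rule mult_left_mono)
  moreover have "e$k - c$k = b'$k - a'$k \<or> \<rho> * max_edge c e \<le> e$k - c$k"
    using assms(1) unfolding regular_subbox_def by blast
  ultimately show "e$k - c$k = b$k - a$k \<or> \<rho> * max_edge c e \<le> e$k - c$k"
    using assms(3,4) by (cases "k = j") auto
qed

lemma regular_subbox_edges_ge:
  fixes a b c e :: "real^'d"
  assumes "regular_subbox \<rho> a b c e" "0 \<le> \<rho>" "\<rho> \<le> 1"
    and "\<forall>k. a$k < b$k" "\<forall>k. c$k < e$k" "max_edge c e \<le> max_edge a b"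
  shows "\<rho> * max_edge c e / max_edge a b * (b$k - a$k) \<le> e$k - c$k"
proof -
  have LB: "0 < max_edge a b" and LP: "0 < max_edge c e" and "0 < b$k - a$k"
    using assms(4,5) max_edge_pos by auto
  have "\<rho> * max_edge c e \<le> max_edge c e"
    using assms(2,3) LP by (simp add: mult_left_le_one_le)
  then have "\<rho> * max_edge c e \<le> max_edge a b"
    using assms(6) by linarith
  then have ratio: "\<rho> * max_edge c e / max_edge a b \<le> 1"
    using LB by simp
  show ?thesis
  proof (cases "e$k - c$k = b$k - a$k")
    case True
    then show ?thesis
      using mult_right_mono[OF ratio, of "b$k - a$k"] \<open>0 < b$k - a$k\<close> by simp
  next
    case False
    then have "\<rho> * max_edge c e \<le> e$k - c$k"
      using assms(1) unfolding regular_subbox_def by blast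
    moreover have "\<rho> * max_edge c e / max_edge a b * (b$k - a$k)
        \<le> \<rho> * max_edge c e / max_edge a b * max_edge a b"
      using LB LP assms(2) by (intro mult_left_mono max_edge_ge) simp
    ultimately show ?thesis
      using LB by simp
  qed
qed

lemma powr_inverse_power:
  fixes x :: real
  assumes "0 < d" "0 \<le> x"
  shows "(x powr (1 / real d)) ^ d = x"
  using assms by (simp flip: root_powr_inverse)

lemma max_edge_le_of_volume_le:
  fixes a b c e :: "real^'d"
  assumes "0 < \<rho>" "\<rho> \<le> 1" "0 < \<kappa>" "\<kappa> \<le> 1" "1 \<le> n"
    and ab: "\<forall>k. a$k < b$k" and ce: "\<forall>k. c$k < e$k" and sub: "cbox c e \<subseteq> cbox a b"
    and regular: "regular_subbox \<rho> a b c e"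
    and volume: "real n * (\<Prod>k\<in>UNIV. e$k - c$k) \<le> (\<Prod>k\<in>UNIV. b$k - a$k) / \<kappa>"
  shows "max_edge c e \<le> max_edge a b / (\<rho> * \<kappa> * real n powr (1 / real CARD('d)))"
proof -
  define d where "d = CARD('d)"
  define q where "q = real n powr (1 / real d)"
  define r where "r = \<rho> * max_edge c e / max_edge a b"
  have "0 < d" unfolding d_def by simp
  have "1 \<le> q" unfolding q_def using assms(5) by (simp add: ge_one_powr_ge_zero)
  have LB: "0 < max_edge a b" and LP: "0 < max_edge c e" and vB: "0 < (\<Prod>k\<in>UNIV. b$k - a$k)"
    using ab ce max_edge_pos by (auto intro: prod_pos)
  have mono: "max_edge c e \<le> max_edge a b"
    using ce sub by (intro max_edge_mono) (auto simp: less_imp_le)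
  have "0 \<le> r" unfolding r_def using assms(1) LB LP by simp
  have "r ^ d * (\<Prod>k\<in>UNIV. b$k - a$k) = (\<Prod>k\<in>UNIV. r * (b$k - a$k))"
    unfolding d_def by (simp add: prod.distrib)
  also have "\<dots> \<le> (\<Prod>k\<in>UNIV. e$k - c$k)"
  proof (rule prod_mono)
    fix k
    have "r * (b$k - a$k) \<le> e$k - c$k"
      unfolding r_def using assms(1) by (intro regular_subbox_edges_ge[OF regular _ assms(2) ab ce mono]) simp
    moreover have "0 \<le> r * (b$k - a$k)"
      using \<open>0 \<le> r\<close> ab by (simp add: less_imp_le)
    ultimately show "0 \<le> r * (b$k - a$k) \<and> r * (b$k - a$k) \<le> e$k - c$k" by blast
  qed
  finally have "r ^ d * (\<Prod>k\<in>UNIV. b$k - a$k) \<le> (\<Prod>k\<in>UNIV. e$k - c$k)" .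
  then have "real n * (r ^ d * (\<Prod>k\<in>UNIV. b$k - a$k)) \<le> real n * (\<Prod>k\<in>UNIV. e$k - c$k)"
    by (rule mult_left_mono) simp
  also have "\<dots> \<le> (\<Prod>k\<in>UNIV. b$k - a$k) / \<kappa>"
    by (rule volume)
  finally have "real n * (r ^ d * (\<Prod>k\<in>UNIV. b$k - a$k)) \<le> (\<Prod>k\<in>UNIV. b$k - a$k) / \<kappa>" .
  then have "(r * q) ^ d \<le> 1 / \<kappa>"
    using vB assms(3) \<open>0 < d\<close> unfolding q_def
    by (simp add: power_mult_distrib powr_inverse_power field_simps)
  also have "\<dots> \<le> (1 / \<kappa>) ^ d"
    using assms(3,4) \<open>0 < d\<close> power_increasing[of 1 d "1 / \<kappa>"] by simp
  finally have "r * q \<le> 1 / \<kappa>"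
    using \<open>0 \<le> r\<close> \<open>1 \<le> q\<close> \<open>0 < d\<close> assms(3) by (simp add: power_mono_iff)
  then have "max_edge c e * (\<rho> * \<kappa> * q) \<le> max_edge a b"
    using LB assms(3) unfolding r_def by (simp add: field_simps)
  moreover have "0 < \<rho> * \<kappa> * q"
    using assms(1,3) \<open>1 \<le> q\<close> by simp
  ultimately show ?thesis
    unfolding q_def d_def by (simp add: pos_le_divide_eq)
qed

lemma min_edge_ge_of_volume_ge:
  fixes a b c e :: "real^'d"
  assumes "0 < \<rho>" "\<rho> \<le> 1" "0 < \<kappa>" "\<kappa> \<le> 1" "1 \<le> n"
    and ab: "\<forall>k. a$k < b$k" and ce: "\<forall>k. c$k < e$k"
    and regular: "regular_subbox \<rho> a b c e"
    and volume: "\<kappa> * (\<Prod>k\<in>UNIV. b$k - a$k) \<le> real n * (\<Prod>k\<in>UNIV. e$k - c$k)"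
  shows "\<rho> * \<kappa> * min_edge a b / real n powr (1 / real CARD('d)) \<le> min_edge c e"
proof -
  define d where "d = CARD('d)"
  define q where "q = real n powr (1 / real d)"
  have "0 < d" unfolding d_def by simp
  have "1 \<le> q" unfolding q_def using assms(5) by (simp add: ge_one_powr_ge_zero)
  have lB: "0 < min_edge a b" and LP: "0 < max_edge c e"
    using ab ce min_edge_pos max_edge_pos by auto
  have "\<kappa> ^ d \<le> \<kappa>"
    using power_decreasing[of 1 d \<kappa>] assms(3,4) \<open>0 < d\<close> by simp
  then have "(\<kappa> * min_edge a b) ^ d \<le> \<kappa> * min_edge a b ^ d"
    unfolding power_mult_distrib using lB by (intro mult_right_mono) simp_all
  also have "\<dots> \<le> \<kappa> * (\<Prod>k\<in>UNIV. b$k - a$k)"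
    using min_edge_power_le_prod[OF ab] assms(3) unfolding d_def by simp
  also have "\<dots> \<le> real n * (\<Prod>k\<in>UNIV. e$k - c$k)"
    by (rule volume)
  also have "\<dots> \<le> real n * max_edge c e ^ d"
    using prod_le_max_edge_power[of c e] ce unfolding d_def
    by (intro mult_left_mono) (simp_all add: less_imp_le)
  also have "\<dots> = (q * max_edge c e) ^ d"
    unfolding q_def power_mult_distrib using \<open>0 < d\<close> by (simp add: powr_inverse_power)
  finally have key: "\<kappa> * min_edge a b \<le> q * max_edge c e"
    using \<open>0 < d\<close> \<open>1 \<le> q\<close> lB LP assms(3) by (simp add: power_mono_iff)
  obtain k where k: "min_edge c e = e$k - c$k"
    using min_edge_attained by blast
  have "\<rho> * \<kappa> * min_edge a b / q \<le> e$k - c$k"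
  proof (cases "e$k - c$k = b$k - a$k")
    case True
    have "\<rho> * \<kappa> \<le> 1"
      using assms(1-4) by (simp add: mult_le_one)
    then have "\<rho> * \<kappa> * min_edge a b \<le> min_edge a b"
      using lB by (simp add: mult_left_le_one_le)
    also have "\<dots> \<le> min_edge a b * q"
      using lB \<open>1 \<le> q\<close> by simp
    finally have "\<rho> * \<kappa> * min_edge a b \<le> min_edge a b * q" .
    then have "\<rho> * \<kappa> * min_edge a b / q \<le> min_edge a b"
      using \<open>1 \<le> q\<close> by (simp add: divide_le_eq)
    also have "\<dots> \<le> e$k - c$k"
      using True min_edge_le by simp
    finally show ?thesis .
  next
    case False
    then have "\<rho> * max_edge c e \<le> e$k - c$k"
      using regular unfolding regular_subbox_def by blast
    moreover have "\<rho> * \<kappa> * min_edge a b / q \<le> \<rho> * max_edge c e"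
      using key assms(1) \<open>1 \<le> q\<close> by (simp add: divide_le_eq field_simps)
    ultimately show ?thesis by linarith
  qed
  then show ?thesis
    using k unfolding q_def d_def by simp
qed

section \<open>Partitions into boxes\<close>

definition box_partition ::
  "nat \<Rightarrow> (nat \<Rightarrow> real^'d) \<Rightarrow> (nat \<Rightarrow> real^'d) \<Rightarrow> (real^'d) set \<Rightarrow> bool" where
  "box_partition n c e S \<longleftrightarrow>
     (\<forall>i<n. \<forall>k. c i $ k < e i $ k) \<and> (\<Union>i<n. cbox (c i) (e i)) = S \<and>
     (\<forall>i<n. \<forall>j<n. i \<noteq> j \<longrightarrow> interior (cbox (c i) (e i)) \<inter> interior (cbox (c j) (e j)) = {})"

lemma box_partition_single: "\<forall>k. a$k < b$k \<Longrightarrow> box_partition 1 (\<lambda>_. a) (\<lambda>_. b) (cbox a b)"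
  by (simp add: box_partition_def lessThan_Suc)

lemma box_partition_subset: "box_partition n c e S \<Longrightarrow> i < n \<Longrightarrow> cbox (c i) (e i) \<subseteq> S"
  unfolding box_partition_def by blast

lemma box_partition_max_edge_le:
  assumes "box_partition n c e S" "S \<subseteq> cbox a b" "i < n"
  shows "max_edge (c i) (e i) \<le> max_edge a b"
proof (rule max_edge_mono)
  show "\<forall>k. c i $ k \<le> e i $ k"
    using assms(1,3) unfolding box_partition_def by (simp add: less_imp_le)
  show "cbox (c i) (e i) \<subseteq> cbox a b"
    using box_partition_subset[OF assms(1,3)] assms(2) by blast
qed

lemma all_less_add_iff:
  fixes n m :: nat
  shows "(\<forall>i<n + m. P (if i < n then f i else g (i - n)) (if i < n then f' i else g' (i - n)))
     \<longleftrightarrow> (\<forall>i<n. P (f i) (f' i)) \<and> (\<forall>i<m. P (g i) (g' i))"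
proof
  assume H: "\<forall>i<n + m. P (if i < n then f i else g (i - n)) (if i < n then f' i else g' (i - n))"
  show "(\<forall>i<n. P (f i) (f' i)) \<and> (\<forall>i<m. P (g i) (g' i))"
  proof (intro conjI allI impI)
    show "P (f i) (f' i)" if "i < n" for i
      using that H[rule_format, of i] by simp
    show "P (g i) (g' i)" if "i < m" for i using that H[rule_format, of "i + n"] by simp
  qed
next
  assume H: "(\<forall>i<n. P (f i) (f' i)) \<and> (\<forall>i<m. P (g i) (g' i))"
  show "\<forall>i<n + m. P (if i < n then f i else g (i - n)) (if i < n then f' i else g' (i - n))"
  proof (intro allI impI)
    fix i assume "i < n + m"
    then show "P (if i < n then f i else g (i - n)) (if i < n then f' i else g' (i - n))"
      using H by (cases "i < n") simp_all
  qed
qed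

lemma box_partition_append:
  assumes "box_partition n c e S" "box_partition m c' e' T" "interior S \<inter> interior T = {}"
  shows "box_partition (n + m) (\<lambda>i. if i < n then c i else c' (i - n))
           (\<lambda>i. if i < n then e i else e' (i - n)) (S \<union> T)"
  unfolding box_partition_def
proof (intro conjI)
  let ?c = "\<lambda>i. if i < n then c i else c' (i - n)" and ?e = "\<lambda>i. if i < n then e i else e' (i - n)"
  show "\<forall>i<n + m. \<forall>k. ?c i $ k < ?e i $ k"
    using assms(1,2) unfolding box_partition_def
    by (intro all_less_add_iff[of n m "\<lambda>u v. \<forall>k. u $ k < v $ k" c c' e e', THEN iffD2]) simp
  have "x \<in> (\<Union>i<n + m. cbox (?c i) (?e i)) \<longleftrightarrow> x \<in> (\<Union>i<n. cbox (c i) (e i)) \<union> (\<Union>i<m. cbox (c' i) (e' i))"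
    for x using all_less_add_iff[of n m "\<lambda>u v. x \<notin> cbox u v" c c' e e']
    by (simp only: UN_iff Un_iff lessThan_iff) blast
  then show "(\<Union>i<n + m. cbox (?c i) (?e i)) = S \<union> T"
    using assms(1,2) unfolding box_partition_def by (simp add: set_eq_iff)
  have inside_S: "interior (cbox (?c i) (?e i)) \<subseteq> interior S" if "i < n" for i
    using that interior_mono[OF box_partition_subset[OF assms(1) that]] by simp
  have inside_T: "interior (cbox (?c i) (?e i)) \<subseteq> interior T" if "n \<le> i" "i < n + m" for i
    using that interior_mono[OF box_partition_subset[OF assms(2), of "i - n"]] by simp
  show "\<forall>i<n + m. \<forall>j<n + m. i \<noteq> j \<longrightarrow> interior (cbox (?c i) (?e i)) \<inter> interior (cbox (?c j) (?e j)) = {}"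
  proof (intro allI impI)
    fix i j assume ij: "i < n + m" "j < n + m" "i \<noteq> j"
    consider "i < n" "j < n" | "n \<le> i" "n \<le> j" | "i < n" "n \<le> j" | "n \<le> i" "j < n"
      by linarith
    then show "interior (cbox (?c i) (?e i)) \<inter> interior (cbox (?c j) (?e j)) = {}"
    proof cases
      case 1
      then show ?thesis using assms(1) ij unfolding box_partition_def by simp
    next
      case 2
      then have "i - n < m" "j - n < m" "i - n \<noteq> j - n" using ij by auto
      then show ?thesis using 2 assms(2) unfolding box_partition_def by simp
    next
      case 3
      then show ?thesis using inside_S[of i] inside_T[of j] ij assms(3) by blast
    next
      case 4
      then show ?thesis using inside_S[of j] inside_T[of i] ij assms(3) by blast
    qed
  qed
qed

section \<open>Measures with pinched density\<close>

lemma measure_density_bounds: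
  fixes M :: "'a measure" and h :: "'a \<Rightarrow> real"
  assumes h: "h \<in> borel_measurable M" and A: "A \<in> sets M" "emeasure M A < \<infinity>"
    and bounds: "\<forall>x\<in>A. m \<le> h x \<and> h x \<le> K" and m: "0 \<le> m" "m \<le> K"
  shows "A \<in> fmeasurable (density M (\<lambda>x. ennreal (h x)))"
    and "m * measure M A \<le> measure (density M (\<lambda>x. ennreal (h x))) A"
    and "measure (density M (\<lambda>x. ennreal (h x))) A \<le> K * measure M A"
proof -
  let ?D = "density M (\<lambda>x. ennreal (h x))"
  have D: "emeasure ?D A = (\<integral>\<^sup>+ x. ennreal (h x) * indicator A x \<partial>M)"
    using h A(1) by (intro emeasure_density) auto
  have "emeasure ?D A \<le> (\<integral>\<^sup>+ x. ennreal K * indicator A x \<partial>M)"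
    unfolding D using bounds by (intro nn_integral_mono) (auto simp: indicator_def intro!: ennreal_leI)
  then have upper: "emeasure ?D A \<le> ennreal K * emeasure M A"
    using A(1) by (simp add: nn_integral_cmult_indicator)
  have "(\<integral>\<^sup>+ x. ennreal m * indicator A x \<partial>M) \<le> emeasure ?D A"
    unfolding D using bounds by (intro nn_integral_mono) (auto simp: indicator_def intro!: ennreal_leI)
  then have lower: "ennreal m * emeasure M A \<le> emeasure ?D A"
    using A(1) by (simp add: nn_integral_cmult_indicator)
  have finite: "emeasure ?D A < \<infinity>"
    using upper A(2) by (simp add: ennreal_mult_less_top le_less_trans)
  then show "A \<in> fmeasurable ?D"
    using A(1) by (auto simp: fmeasurable_def)
  have M: "emeasure M A = ennreal (measure M A)" and D': "emeasure ?D A = ennreal (measure ?D A)"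
    using A(2) finite by (simp_all add: emeasure_eq_ennreal_measure less_top)
  show "m * measure M A \<le> measure ?D A"
    using lower m unfolding M D' by (simp add: ennreal_mult'[symmetric])
  show "measure ?D A \<le> K * measure M A"
    using upper m unfolding M D' by (simp add: ennreal_mult'[symmetric])
qed

lemma le_one_if_pinched:
  fixes \<delta> x :: real
  assumes "0 < \<delta>" "\<delta> \<le> x" "x \<le> 1/\<delta>"
  shows "\<delta> \<le> 1"
proof (rule ccontr)
  assume "\<not> \<delta> \<le> 1"
  then have "1 < \<delta> * \<delta>" by (simp add: less_1_mult)
  moreover have "\<delta> * \<delta> \<le> \<delta> * x"
    using assms(1,2) by simp
  moreover have "\<delta> * x \<le> 1"
    using assms(1,3) by (simp add: field_simps)
  ultimately show False by linarith
qed

locale pinched_density =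
  fixes \<delta> :: real and h :: "real^'d \<Rightarrow> real" and S :: "(real^'d) set"
  assumes delta_pos: "0 < \<delta>" and delta_le_1: "\<delta> \<le> 1"
    and h_measurable: "h \<in> borel_measurable lebesgue"
    and h_pinched: "\<forall>x\<in>S. \<delta> \<le> h x \<and> h x \<le> 1/\<delta>"
begin

abbreviation \<mu> :: "(real^'d) measure" where
  "\<mu> \<equiv> density lebesgue (\<lambda>x. ennreal (h x))"

lemma measure_cbox_bounds:
  assumes "cbox c e \<subseteq> S"
  shows "cbox c e \<in> fmeasurable \<mu>"
    and "\<delta> * measure lebesgue (cbox c e) \<le> measure \<mu> (cbox c e)"
    and "measure \<mu> (cbox c e) \<le> measure lebesgue (cbox c e) / \<delta>"
proof -
  have pinched: "\<forall>x\<in>cbox c e. \<delta> \<le> h x \<and> h x \<le> 1/\<delta>"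
    using assms h_pinched by blast
  have "\<delta> \<le> 1/\<delta>"
    using delta_pos delta_le_1 by (simp add: field_simps mult_le_one)
  note bounds = measure_density_bounds[OF h_measurable _ _ pinched less_imp_le[OF delta_pos] this]
  have "cbox c e \<in> sets lebesgue" "emeasure lebesgue (cbox c e) < \<infinity>"
    using lmeasurable_cbox[of c e] unfolding fmeasurable_def by blast+
  from bounds[OF this] show "cbox c e \<in> fmeasurable \<mu>"
    and "\<delta> * measure lebesgue (cbox c e) \<le> measure \<mu> (cbox c e)"
    and "measure \<mu> (cbox c e) \<le> measure lebesgue (cbox c e) / \<delta>"
    by simp_all
qed

lemma measure_cbox_split:
  assumes "cbox a b \<subseteq> S" "a$j \<le> s" "s \<le> b$j"
  shows "measure \<mu> (cbox a b) = measure \<mu> (cbox a (vec_upd b j s)) + measure \<mu> (cbox (vec_upd a j s) b)"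
proof -
  note split = cbox_split_coordinate[OF assms(2,3)]
  have "negligible {x::real^'d. x$j = s}"
    using negligible_standard_hyperplane[of "axis j (1::real)" s] by (simp add: cart_eq_inner_axis)
  then have "AE x in lebesgue. x \<notin> {x. x$j = s}"
    by (intro AE_not_in) (simp add: negligible_iff_null_sets)
  then have "AE x in lebesgue. x \<notin> cbox a (vec_upd b j s) \<or> x \<notin> cbox (vec_upd a j s) b"
    by (rule eventually_mono) (use cbox_halves_Int_subset[of a b j s] in blast)
  moreover have "(\<lambda>x. ennreal (h x)) \<in> borel_measurable lebesgue"
    using h_measurable by measurable
  ultimately have "AE x in \<mu>. x \<notin> cbox a (vec_upd b j s) \<or> x \<notin> cbox (vec_upd a j s) b"
    by (subst AE_density) (auto elim: eventually_mono)
  moreover have "cbox a (vec_upd b j s) \<subseteq> S" "cbox (vec_upd a j s) b \<subseteq> S"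
    using assms(1) unfolding split by blast+
  ultimately show ?thesis
    unfolding split by (intro measure_Un_AE measure_cbox_bounds(1))
qed

lemma measure_slab_bounds:
  assumes "cbox a b \<subseteq> S" "\<forall>k. a$k \<le> b$k" "a$j \<le> s" "s \<le> t" "t \<le> b$j"
  defines "K \<equiv> \<Prod>k\<in>-{j}. b$k - a$k"
  shows "\<delta> * ((t - s) * K) \<le> measure \<mu> (cbox (vec_upd a j s) (vec_upd b j t))"
    and "measure \<mu> (cbox (vec_upd a j s) (vec_upd b j t)) \<le> (t - s) * K / \<delta>"
proof -
  have slab: "cbox (vec_upd a j s) (vec_upd b j t) \<subseteq> S"
    using assms(1,3,5) cbox_vec_upd_subset[of a j s t b] by auto
  have vol: "measure lebesgue (cbox (vec_upd a j s) (vec_upd b j t)) = (t - s) * K"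
    unfolding K_def by (rule measure_cbox_vec_upd[OF assms(2,4)])
  show "\<delta> * ((t - s) * K) \<le> measure \<mu> (cbox (vec_upd a j s) (vec_upd b j t))"
    using measure_cbox_bounds(2)[OF slab] unfolding vol .
  show "measure \<mu> (cbox (vec_upd a j s) (vec_upd b j t)) \<le> (t - s) * K / \<delta>"
    using measure_cbox_bounds(3)[OF slab] unfolding vol .
qed

lemma slab_width_ge:
  assumes "cbox a b \<subseteq> S" "\<forall>k. a$k < b$k" "a$j \<le> s" "s \<le> t" "t \<le> b$j" "0 \<le> q"
    and "measure \<mu> (cbox (vec_upd a j s) (vec_upd b j t)) = q * measure \<mu> (cbox a b)"
  shows "\<delta>^2 * q * (b$j - a$j) \<le> t - s"
proof -
  define K where "K = (\<Prod>k\<in>-{j}. b$k - a$k)"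
  have "0 < K" unfolding K_def using assms(2) by (simp add: prod_pos)
  have ab: "\<forall>k. a$k \<le> b$k" using assms(2) less_imp_le by blast
  have "\<delta> * ((b$j - a$j) * K) \<le> measure \<mu> (cbox a b)"
    using measure_slab_bounds(1)[of a b j "a$j" "b$j"] assms(1) ab unfolding K_def by simp
  then have "q * (\<delta> * ((b$j - a$j) * K)) \<le> q * measure \<mu> (cbox a b)"
    using assms(6) by (rule mult_left_mono)
  also have "\<dots> \<le> (t - s) * K / \<delta>"
    using measure_slab_bounds(2)[OF assms(1) ab assms(3-5)] assms(7) unfolding K_def by simp
  finally have "q * (\<delta> * ((b$j - a$j) * K)) \<le> (t - s) * K / \<delta>" .
  then have "(\<delta>^2 * q * (b$j - a$j)) * K \<le> (t - s) * K"
    using delta_pos by (simp add: field_simps power2_eq_square)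
  then show ?thesis using \<open>0 < K\<close> by simp
qed

lemma continuous_on_measure_lower_part:
  assumes "cbox a b \<subseteq> S" "\<forall>k. a$k \<le> b$k"
  shows "continuous_on {a$j..b$j} (\<lambda>t. measure \<mu> (cbox a (vec_upd b j t)))"
proof (rule lipschitz_on_continuous_on)
  define K where "K = (\<Prod>k\<in>-{j}. b$k - a$k)"
  show "(K / \<delta>)-lipschitz_on {a$j..b$j} (\<lambda>t. measure \<mu> (cbox a (vec_upd b j t)))"
  proof (rule lipschitz_on_leI)
    show "0 \<le> K / \<delta>" unfolding K_def using assms(2) delta_pos by (simp add: prod_nonneg)
    fix s t assume st: "s \<in> {a$j..b$j}" "t \<in> {a$j..b$j}" "s \<le> t"
    have "cbox a (vec_upd b j t) \<subseteq> S"
      using assms(1) st cbox_vec_upd_subset[of a j "a$j" t b] by auto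
    then have "measure \<mu> (cbox a (vec_upd b j t))
        = measure \<mu> (cbox a (vec_upd b j s)) + measure \<mu> (cbox (vec_upd a j s) (vec_upd b j t))"
      using measure_cbox_split[of a "vec_upd b j t" j s] st by simp
    then show "dist (measure \<mu> (cbox a (vec_upd b j s))) (measure \<mu> (cbox a (vec_upd b j t)))
        \<le> K / \<delta> * dist s t"
      using measure_slab_bounds(2)[OF assms, of j s t] st measure_nonneg[of \<mu>]
      unfolding K_def by (simp add: dist_real_def mult.commute)
  qed
qed

lemma exists_cut:
  assumes "cbox a b \<subseteq> S" "\<forall>k. a$k < b$k" "0 \<le> p" "p \<le> 1"
  obtains t where "a$j \<le> t" "t \<le> b$j"
    and "measure \<mu> (cbox a (vec_upd b j t)) = p * measure \<mu> (cbox a b)"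
    and "measure \<mu> (cbox (vec_upd a j t) b) = (1 - p) * measure \<mu> (cbox a b)"
    and "\<delta>^2 * p * (b$j - a$j) \<le> t - a$j" "\<delta>^2 * (1 - p) * (b$j - a$j) \<le> b$j - t"
proof -
  let ?F = "\<lambda>t. measure \<mu> (cbox a (vec_upd b j t))"
  have ab: "\<forall>k. a$k \<le> b$k" using assms(2) less_imp_le by blast
  have "?F (a$j) \<le> 0"
    using measure_slab_bounds(2)[OF assms(1) ab, of j "a$j" "a$j"] ab by simp
  also have "0 \<le> p * measure \<mu> (cbox a b)"
    using assms(3) by simp
  finally have "?F (a$j) \<le> p * measure \<mu> (cbox a b)" .
  moreover have "p * measure \<mu> (cbox a b) \<le> ?F (b$j)"
    using assms(3,4) by (simp add: mult_left_le_one_le)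
  moreover have "a$j \<le> b$j"
    using ab by blast
  ultimately obtain t where t: "a$j \<le> t" "t \<le> b$j" "?F t = p * measure \<mu> (cbox a b)"
    using IVT'[OF _ _ _ continuous_on_measure_lower_part[OF assms(1) ab]] by blast
  have upper: "measure \<mu> (cbox (vec_upd a j t) b) = (1 - p) * measure \<mu> (cbox a b)"
    using measure_cbox_split[OF assms(1) t(1,2)] t(3) by (simp add: algebra_simps)
  show ?thesis
  proof (rule that[OF t upper])
    show "\<delta>^2 * p * (b$j - a$j) \<le> t - a$j"
      using slab_width_ge[OF assms(1,2) order_refl t(1,2) assms(3)] t(3) by simp
    show "\<delta>^2 * (1 - p) * (b$j - a$j) \<le> b$j - t"
      using slab_width_ge[OF assms(1,2) t(1,2) order_refl, of "1 - p"] upper assms(4) by simp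
  qed
qed

lemma exists_cut_longest_edge:
  assumes "cbox a b \<subseteq> S" "\<forall>k. a$k < b$k" "1/3 \<le> p" "p \<le> 2/3"
    and longest: "max_edge a b = b$j - a$j"
  obtains t where "a$j < t" "t < b$j"
    and "measure \<mu> (cbox a (vec_upd b j t)) = p * measure \<mu> (cbox a b)"
    and "measure \<mu> (cbox (vec_upd a j t) b) = (1 - p) * measure \<mu> (cbox a b)"
    and "\<delta>^2/3 * max_edge a b \<le> t - a$j" "\<delta>^2/3 * max_edge a b \<le> b$j - t"
proof -
  obtain t where t: "a$j \<le> t" "t \<le> b$j"
      "measure \<mu> (cbox a (vec_upd b j t)) = p * measure \<mu> (cbox a b)"
      "measure \<mu> (cbox (vec_upd a j t) b) = (1 - p) * measure \<mu> (cbox a b)"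
    and lower: "\<delta>^2 * p * (b$j - a$j) \<le> t - a$j"
    and upper: "\<delta>^2 * (1 - p) * (b$j - a$j) \<le> b$j - t"
    using exists_cut[OF assms(1,2), of p j] assms(3,4) by auto
  have len: "0 < b$j - a$j" using assms(2) by simp
  have "\<delta>^2 * (1/3 * (b$j - a$j)) \<le> \<delta>^2 * (p * (b$j - a$j))"
    "\<delta>^2 * (1/3 * (b$j - a$j)) \<le> \<delta>^2 * ((1 - p) * (b$j - a$j))"
    using assms(3,4) len by (intro mult_left_mono mult_right_mono; simp)+
  then have cuts: "\<delta>^2/3 * max_edge a b \<le> t - a$j" "\<delta>^2/3 * max_edge a b \<le> b$j - t"
    using lower upper unfolding longest by (simp_all add: field_simps)
  moreover have "0 < \<delta>^2/3 * max_edge a b"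
    using delta_pos len longest by simp
  ultimately show ?thesis
    by (intro that[OF _ _ t(3,4)]) linarith+
qed

definition balanced_partition ::
  "nat \<Rightarrow> (nat \<Rightarrow> real^'d) \<Rightarrow> (nat \<Rightarrow> real^'d) \<Rightarrow> real^'d \<Rightarrow> real^'d \<Rightarrow> bool" where
  "balanced_partition n c e a b \<longleftrightarrow> box_partition n c e (cbox a b) \<and>
     (\<forall>i<n. measure \<mu> (cbox (c i) (e i)) = measure \<mu> (cbox a b) / real n \<and>
            regular_subbox (\<delta>^2/3) a b (c i) (e i))"

lemma balanced_partition_single:
  "\<forall>k. a$k < b$k \<Longrightarrow> balanced_partition 1 (\<lambda>_. a) (\<lambda>_. b) a b"
  using box_partition_single[of a b] by (simp add: balanced_partition_def regular_subbox_refl)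

lemma balanced_partition_piece:
  assumes P: "balanced_partition m c e a' b'" and "i < m" "1 \<le> m"
    and sub: "cbox a' b' \<subseteq> cbox a b"
    and "\<forall>k. k \<noteq> j \<longrightarrow> b'$k - a'$k = b$k - a$k" "\<delta>^2/3 * max_edge a b \<le> b'$j - a'$j"
    and "measure \<mu> (cbox a' b') = real m / real N * measure \<mu> (cbox a b)"
  shows "measure \<mu> (cbox (c i) (e i)) = measure \<mu> (cbox a b) / real N \<and>
         regular_subbox (\<delta>^2/3) a b (c i) (e i)"
proof
  show "measure \<mu> (cbox (c i) (e i)) = measure \<mu> (cbox a b) / real N"
    using P assms(2,3,7) unfolding balanced_partition_def by simp
  show "regular_subbox (\<delta>^2/3) a b (c i) (e i)"
  proof (rule regular_subbox_trans_cut)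
    show "regular_subbox (\<delta>^2/3) a' b' (c i) (e i)"
      using P assms(2) unfolding balanced_partition_def by blast
    show "max_edge (c i) (e i) \<le> max_edge a b"
      using P sub assms(2) unfolding balanced_partition_def by (intro box_partition_max_edge_le) auto
  qed (use assms(5,6) in simp_all)
qed

lemma balanced_partition_append:
  assumes P1: "balanced_partition n1 c1 e1 a (vec_upd b j t)"
    and P2: "balanced_partition n2 c2 e2 (vec_upd a j t) b"
    and t: "a$j \<le> t" "t \<le> b$j" and n: "1 \<le> n1" "1 \<le> n2"
    and "measure \<mu> (cbox a (vec_upd b j t)) = real n1 / real (n1 + n2) * measure \<mu> (cbox a b)"
    and "measure \<mu> (cbox (vec_upd a j t) b) = real n2 / real (n1 + n2) * measure \<mu> (cbox a b)"
    and "\<delta>^2/3 * max_edge a b \<le> t - a$j" "\<delta>^2/3 * max_edge a b \<le> b$j - t"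
  shows "balanced_partition (n1 + n2) (\<lambda>i. if i < n1 then c1 i else c2 (i - n1))
           (\<lambda>i. if i < n1 then e1 i else e2 (i - n1)) a b"
proof -
  note split = cbox_split_coordinate[OF t]
  let ?Q = "\<lambda>c e. measure \<mu> (cbox c e) = measure \<mu> (cbox a b) / real (n1 + n2) \<and>
                   regular_subbox (\<delta>^2/3) a b c e"
  have "\<forall>i<n1. ?Q (c1 i) (e1 i)" "\<forall>i<n2. ?Q (c2 i) (e2 i)"
    using balanced_partition_piece[OF P1 _ n(1), of _ a b j "n1 + n2"]
      balanced_partition_piece[OF P2 _ n(2), of _ a b j "n1 + n2"] assms(7-10) split
    by auto
  then have "\<forall>i<n1 + n2. ?Q (if i < n1 then c1 i else c2 (i - n1)) (if i < n1 then e1 i else e2 (i - n1))"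
    by (intro all_less_add_iff[of n1 n2 ?Q c1 c2 e1 e2, THEN iffD2] conjI)
  moreover have "box_partition n1 c1 e1 (cbox a (vec_upd b j t))"
    and "box_partition n2 c2 e2 (cbox (vec_upd a j t) b)"
    using P1 P2 unfolding balanced_partition_def by blast+
  from box_partition_append[OF this interior_cbox_halves_disjoint]
  have "box_partition (n1 + n2) (\<lambda>i. if i < n1 then c1 i else c2 (i - n1))
      (\<lambda>i. if i < n1 then e1 i else e2 (i - n1)) (cbox a b)"
    unfolding split[symmetric] .
  ultimately show ?thesis
    unfolding balanced_partition_def by blast
qed

lemma exists_balanced_partition:
  assumes "1 \<le> n" "\<forall>k. a$k < b$k" "cbox a b \<subseteq> S"
  shows "\<exists>c e. balanced_partition n c e a b"
  using assms
proof (induction n arbitrary: a b rule: less_induct)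
  case (less n)
  show ?case
  proof (cases "n = 1")
    case True
    then show ?thesis
      using balanced_partition_single[OF less.prems(2)] by blast
  next
    case False
    define n1 where "n1 = n div 2"
    define n2 where "n2 = n - n1"
    have "2 \<le> n"
      using less.prems(1) False by linarith
    then have n12: "1 \<le> n1" "n1 < n" "1 \<le> n2" "n2 < n" "n = n1 + n2"
      and thirds: "n \<le> 3 * n1" "3 * n1 \<le> 2 * n"
      unfolding n1_def n2_def by presburger+
    define p where "p = real n1 / real n"
    have "real n \<le> 3 * real n1" "3 * real n1 \<le> 2 * real n"
      using thirds by (metis of_nat_le_iff of_nat_mult of_nat_numeral)+
    then have p: "1/3 \<le> p" "p \<le> 2/3" "1 - p = real n2 / real n"
      using n12(2) unfolding p_def n2_def by (simp_all add: field_simps of_nat_diff)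
    obtain j where longest: "max_edge a b = b$j - a$j"
      using max_edge_attained by blast
    obtain t where t: "a$j < t" "t < b$j"
      and measures: "measure \<mu> (cbox a (vec_upd b j t)) = p * measure \<mu> (cbox a b)"
        "measure \<mu> (cbox (vec_upd a j t) b) = (1 - p) * measure \<mu> (cbox a b)"
      and cuts: "\<delta>^2/3 * max_edge a b \<le> t - a$j" "\<delta>^2/3 * max_edge a b \<le> b$j - t"
      using exists_cut_longest_edge[OF less.prems(3,2) p(1,2) longest] by blast
    have "cbox a (vec_upd b j t) \<subseteq> S" "cbox (vec_upd a j t) b \<subseteq> S"
      using less.prems(3) cbox_split_coordinate[of a j t b] t by auto
    moreover have "\<forall>k. a$k < vec_upd b j t $ k" "\<forall>k. vec_upd a j t $ k < b$k"
      using less.prems(2) t by auto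
    ultimately obtain c1 e1 c2 e2 where "balanced_partition n1 c1 e1 a (vec_upd b j t)"
      and "balanced_partition n2 c2 e2 (vec_upd a j t) b"
      using less.IH[OF n12(2,1)] less.IH[OF n12(4,3)] by meson
    moreover have "measure \<mu> (cbox a (vec_upd b j t)) = real n1 / real (n1 + n2) * measure \<mu> (cbox a b)"
      and "measure \<mu> (cbox (vec_upd a j t) b) = real n2 / real (n1 + n2) * measure \<mu> (cbox a b)"
      using measures p(3) n12(5) unfolding p_def by simp_all
    ultimately have "balanced_partition (n1 + n2) (\<lambda>i. if i < n1 then c1 i else c2 (i - n1))
        (\<lambda>i. if i < n1 then e1 i else e2 (i - n1)) a b"
      using t n12(1,3) cuts by (intro balanced_partition_append) simp_all
    then show ?thesis
      unfolding n12(5) by blast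
  qed
qed

lemma volume_bounds_of_measure_eq:
  assumes sub: "cbox c e \<subseteq> cbox a b" and B: "cbox a b \<subseteq> S"
    and ce: "\<forall>k. c$k \<le> e$k" and ab: "\<forall>k. a$k \<le> b$k" and "1 \<le> n"
    and measure_eq: "measure \<mu> (cbox c e) = measure \<mu> (cbox a b) / real n"
  shows "\<delta>^2 * (\<Prod>k\<in>UNIV. b$k - a$k) \<le> real n * (\<Prod>k\<in>UNIV. e$k - c$k)"
    and "real n * (\<Prod>k\<in>UNIV. e$k - c$k) \<le> (\<Prod>k\<in>UNIV. b$k - a$k) / \<delta>^2"
proof -
  have P: "cbox c e \<subseteq> S" using sub B by blast
  have n: "0 < real n" using \<open>1 \<le> n\<close> by simp
  have mu: "measure \<mu> (cbox a b) = real n * measure \<mu> (cbox c e)"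
    using measure_eq n by simp
  have B_lower: "\<delta> * (\<Prod>k\<in>UNIV. b$k - a$k) \<le> measure \<mu> (cbox a b)"
    and B_upper: "measure \<mu> (cbox a b) \<le> (\<Prod>k\<in>UNIV. b$k - a$k) / \<delta>"
    using measure_cbox_bounds(2,3)[OF B] measure_cbox_cart[OF ab] by simp_all
  have P_lower: "\<delta> * (\<Prod>k\<in>UNIV. e$k - c$k) \<le> measure \<mu> (cbox c e)"
    and P_upper: "measure \<mu> (cbox c e) \<le> (\<Prod>k\<in>UNIV. e$k - c$k) / \<delta>"
    using measure_cbox_bounds(2,3)[OF P] measure_cbox_cart[OF ce] by simp_all
  have "\<delta> * (\<delta> * (\<Prod>k\<in>UNIV. b$k - a$k)) \<le> \<delta> * (real n * measure \<mu> (cbox c e))"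
    using B_lower delta_pos unfolding mu by simp
  also have "\<dots> = real n * (\<delta> * measure \<mu> (cbox c e))"
    by simp
  also have "\<dots> \<le> real n * (\<Prod>k\<in>UNIV. e$k - c$k)"
    using P_upper delta_pos n by (simp add: field_simps)
  finally show "\<delta>^2 * (\<Prod>k\<in>UNIV. b$k - a$k) \<le> real n * (\<Prod>k\<in>UNIV. e$k - c$k)"
    using delta_pos by (simp add: power2_eq_square mult.assoc)
  have "real n * (\<delta> * (\<Prod>k\<in>UNIV. e$k - c$k)) \<le> real n * measure \<mu> (cbox c e)"
    using P_lower n by simp
  also have "\<dots> \<le> (\<Prod>k\<in>UNIV. b$k - a$k) / \<delta>"
    using B_upper unfolding mu .
  finally show "real n * (\<Prod>k\<in>UNIV. e$k - c$k) \<le> (\<Prod>k\<in>UNIV. b$k - a$k) / \<delta>^2"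
    using delta_pos by (simp add: power2_eq_square field_simps)
qed

lemma edge_bounds_of_measure_eq:
  assumes sub: "cbox c e \<subseteq> cbox a b" and B: "cbox a b \<subseteq> S"
    and ce: "\<forall>k. c$k < e$k" and ab: "\<forall>k. a$k < b$k" and n: "1 \<le> n"
    and measure_eq: "measure \<mu> (cbox c e) = measure \<mu> (cbox a b) / real n"
    and regular: "regular_subbox (\<delta>^2/3) a b c e"
  shows "min_edge a b / (3/\<delta>^4 * real n powr (1 / real CARD('d))) \<le> min_edge c e"
    and "max_edge c e \<le> 3/\<delta>^4 / real n powr (1 / real CARD('d)) * max_edge a b"
proof -
  note volume = volume_bounds_of_measure_eq[OF sub B _ _ n measure_eq]
  have kappa: "0 < \<delta>^2" "\<delta>^2 \<le> 1"
    using delta_pos delta_le_1 by (simp_all add: power_le_one)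
  then have rho: "0 < \<delta>^2/3" "\<delta>^2/3 \<le> 1"
    by simp_all
  have C_eq: "\<delta>^2/3 * \<delta>^2 = 1 / (3/\<delta>^4)"
    by (simp add: field_simps eval_nat_numeral)
  have "\<delta>^2/3 * \<delta>^2 * min_edge a b / real n powr (1 / real CARD('d)) \<le> min_edge c e"
    using volume(1) ab ce by (intro min_edge_ge_of_volume_ge[OF rho kappa n ab ce regular]) (simp_all add: less_imp_le)
  then show "min_edge a b / (3/\<delta>^4 * real n powr (1 / real CARD('d))) \<le> min_edge c e"
    unfolding C_eq by (simp add: mult.commute)
  have "max_edge c e \<le> max_edge a b / (\<delta>^2/3 * \<delta>^2 * real n powr (1 / real CARD('d)))"
    using volume(2) ab ce by (intro max_edge_le_of_volume_le[OF rho kappa n ab ce sub regular]) (simp_all add: less_imp_le)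
  then show "max_edge c e \<le> 3/\<delta>^4 / real n powr (1 / real CARD('d)) * max_edge a b"
    unfolding C_eq by (simp add: mult.commute)
qed

end

lemma exists_partition_edge_bounds:
  fixes a b :: "real^'d" and h :: "real^'d \<Rightarrow> real"
  assumes "0 < \<delta>" "\<forall>k. a$k < b$k" "1 \<le> n" "h \<in> borel_measurable lebesgue"
    and "\<forall>x\<in>cbox a b. \<delta> \<le> h x \<and> h x \<le> 1/\<delta>"
  shows "\<exists>c e :: nat \<Rightarrow> real^'d.
    (\<forall>i<n. \<forall>k. c i $ k \<le> e i $ k) \<and>
    (\<forall>i<n. cbox (c i) (e i) \<subseteq> cbox a b) \<and>
    (\<Union>i<n. cbox (c i) (e i)) = cbox a b \<and>
    (\<forall>i<n. \<forall>j<n. i \<noteq> j \<longrightarrow> interior (cbox (c i) (e i)) \<inter> interior (cbox (c j) (e j)) = {}) \<and>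
    (\<forall>i<n. measure (density lebesgue (\<lambda>x. ennreal (h x))) (cbox (c i) (e i))
            = measure (density lebesgue (\<lambda>x. ennreal (h x))) (cbox a b) / real n) \<and>
    (\<forall>i<n. min_edge a b / (3/\<delta>^4 * real n powr (1 / real CARD('d))) \<le> min_edge (c i) (e i) \<and>
           min_edge (c i) (e i) \<le> max_edge (c i) (e i) \<and>
           max_edge (c i) (e i) \<le> 3/\<delta>^4 / real n powr (1 / real CARD('d)) * max_edge a b)"
proof -
  have "a \<in> cbox a b"
    using assms(2) by (simp add: mem_box_cart less_imp_le)
  then have "\<delta> \<le> 1"
    using le_one_if_pinched assms(1,5) by blast
  then interpret pinched_density \<delta> h "cbox a b"
    using assms(1,4,5) by unfold_locales
  obtain c e where "balanced_partition n c e a b"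
    using exists_balanced_partition[OF assms(3,2) order_refl] by blast
  then have P: "box_partition n c e (cbox a b)"
    and M: "\<forall>i<n. measure \<mu> (cbox (c i) (e i)) = measure \<mu> (cbox a b) / real n \<and>
                  regular_subbox (\<delta>^2/3) a b (c i) (e i)"
    unfolding balanced_partition_def by blast+
  have edges: "min_edge a b / (3/\<delta>^4 * real n powr (1 / real CARD('d))) \<le> min_edge (c i) (e i) \<and>
      max_edge (c i) (e i) \<le> 3/\<delta>^4 / real n powr (1 / real CARD('d)) * max_edge a b" if "i < n" for i
    using edge_bounds_of_measure_eq[OF box_partition_subset[OF P that] order_refl _ assms(2,3)] M P that
    unfolding box_partition_def by simp
  show ?thesis
    by (rule exI[of _ c], rule exI[of _ e])
      (use P M edges box_partition_subset[OF P] in \<open>auto simp: box_partition_def less_imp_le min_edge_le_max_edge\<close>)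
qed

theorem lemma2p6:
  fixes \<delta> :: real
  assumes "\<delta> > 0"
  shows "\<exists>C::real. C > 0 \<and>
    (\<forall>(a::real^'d) b (n::nat) (h::real^'d \<Rightarrow> real).
      (\<forall>k. a$k < b$k) \<longrightarrow> n \<ge> 1 \<longrightarrow>
      h \<in> borel_measurable lebesgue \<longrightarrow>
      (\<forall>x\<in>cbox a b. \<delta> \<le> h x \<and> h x \<le> 1/\<delta>) \<longrightarrow>
      (\<exists>c e :: nat \<Rightarrow> real^'d.
         (\<forall>i<n. \<forall>k. c i $ k \<le> e i $ k) \<and>
         (\<forall>i<n. cbox (c i) (e i) \<subseteq> cbox a b) \<and>
         (\<Union>i<n. cbox (c i) (e i)) = cbox a b \<and>
         (\<forall>i<n. \<forall>j<n. i \<noteq> j \<longrightarrow> interior (cbox (c i) (e i)) \<inter> interior (cbox (c j) (e j)) = {}) \<and>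
         (\<forall>i<n. measure (density lebesgue (\<lambda>x. ennreal (h x))) (cbox (c i) (e i))
                 = measure (density lebesgue (\<lambda>x. ennreal (h x))) (cbox a b) / real n) \<and>
         (\<forall>i<n. min_edge a b / (C * real n powr (1 / real CARD('d))) \<le> min_edge (c i) (e i) \<and>
                min_edge (c i) (e i) \<le> max_edge (c i) (e i) \<and>
                max_edge (c i) (e i) \<le> C / real n powr (1 / real CARD('d)) * max_edge a b)))"
proof (rule exI[of _ "3/\<delta>^4"], intro conjI allI impI)
  show "0 < 3/\<delta>^4"
    using assms by simp
qed (rule exists_partition_edge_bounds[OF assms])

end
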